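(* Every topologically mixing sofic shift space over a finite alphabet has the $\bar d$-shadowing property.
   Context: A sofic shift is the set of label sequences of infinite paths in a finite edge-labelled directed graph; $\mathcal L(X)$ denotes the set of finite words appearing in $X$. $X$ is topologically mixing if for all $u,w\in\mathcal L(X)$ there is $N$ such that for all $n\ge N$ there is $v$ with $|v|=n$ and $uvw\in\mathcal L(X)$. $\bar d(x,y)=\limsup_{n\to\infty}\frac1n|\{0\le j<n:x_j\ne y_j\}|$. $X$ has the $\bar d$-shadowing property if for every $\varepsilon>0$ there is $N\in\mathbb N$ such that for every sequence $(w^{(j)})_{j\ge1}$ of words in $\mathcal L(X)$ with $|w^{(j)}|\ge N$ there is $x'\in X$ with $\bar d(w^{(1)}w^{(2)}\cdots,x')<\varepsilon$. *)

theory Defs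
  imports "HOL-Analysis.Analysis" "HOL-Library.Liminf_Limsup"
begin

definition sofic_shift ::
  "'e set \<Rightarrow> ('e \<Rightarrow> 'v) \<Rightarrow> ('e \<Rightarrow> 'v) \<Rightarrow> ('e \<Rightarrow> 'a) \<Rightarrow> (nat \<Rightarrow> 'a) set" where
  "sofic_shift E src tgt lab =
     {x. \<exists>p :: nat \<Rightarrow> 'e. (\<forall>i. p i \<in> E \<and> tgt (p i) = src (p (Suc i))) \<and>
                         (\<forall>i. x i = lab (p i))}"

definition language :: "(nat \<Rightarrow> 'a) set \<Rightarrow> 'a list set" where
  "language X = {w. \<exists>x\<in>X. \<exists>i. w = map x [i..<i + length w]}"

definition top_mixing :: "(nat \<Rightarrow> 'a) set \<Rightarrow> bool" where
  "top_mixing X \<longleftrightarrow>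
     (\<forall>u\<in>language X. \<forall>w\<in>language X. \<exists>N. \<forall>n\<ge>N.
        \<exists>v. length v = n \<and> u @ v @ w \<in> language X)"

definition dbar :: "(nat \<Rightarrow> 'a) \<Rightarrow> (nat \<Rightarrow> 'a) \<Rightarrow> ereal" where
  "dbar x y = limsup (\<lambda>n. ereal (real (card {j. j < n \<and> x j \<noteq> y j}) / real n))"

text \<open>Concatenation w_0 w_1 w_2 ... of a sequence of nonempty words.\<close>
fun word_start :: "(nat \<Rightarrow> 'a list) \<Rightarrow> nat \<Rightarrow> nat" where
  "word_start ws 0 = 0"
| "word_start ws (Suc j) = word_start ws j + length (ws j)"

definition concat_words :: "(nat \<Rightarrow> 'a list) \<Rightarrow> nat \<Rightarrow> 'a" where
  "concat_words ws k =
     (let j = (LEAST j. k < word_start ws (Suc j)) in ws j ! (k - word_start ws j))"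

definition dbar_shadowing :: "(nat \<Rightarrow> 'a) set \<Rightarrow> bool" where
  "dbar_shadowing X \<longleftrightarrow>
     (\<forall>\<epsilon>>0. \<exists>N::nat. N \<ge> 1 \<and>
        (\<forall>ws :: nat \<Rightarrow> 'a list. (\<forall>j. ws j \<in> language X \<and> length (ws j) \<ge> N) \<longrightarrow>
           (\<exists>x'\<in>X. dbar (concat_words ws) x' < ereal \<epsilon>)))"

end

theory Submission
  imports Defs
begin

text \<open>Whether \<open>u v w\<close> lies in the language of a sofic shift for some \<open>v\<close> of length \<open>n\<close>
depends only on the set of edges that can follow a path reading \<open>u\<close> and the set of edges
that can start a path reading \<open>w\<close>. A finite graph has only finitely many such pairs, so
topological mixing yields a single gap length \<open>K\<close> that connects any two words of the
language. Glue the given words one after another, replacing the first \<open>K\<close> symbols of each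
by such a connecting word: the glued words are nested and converge to a point of the shift
(which is closed, by Koenig's lemma), and this point differs from \<open>w\<^sub>0 w\<^sub>1 w\<^sub>2 \<dots>\<close> in at
most \<open>K\<close> of every \<open>N\<close> positions when all words have length at least \<open>N\<close>.\<close>

section \<open>Languages and paths in the presenting graph\<close>

lemma language_take: "w \<in> language X \<Longrightarrow> take m w \<in> language X"
proof -
  assume "w \<in> language X"
  then obtain x i l where "x \<in> X" "w = map x [i..<i + l]"
    unfolding language_def by blast
  then have "take m w = map x [i..<i + length (take m w)]"
    by (simp add: take_map min_def)
  with \<open>x \<in> X\<close> show ?thesis unfolding language_def by blast
qed

lemma language_drop: "w \<in> language X \<Longrightarrow> drop m w \<in> language X"
proof -
  assume "w \<in> language X"
  then obtain x i l where "x \<in> X" "w = map x [i..<i + l]"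
    unfolding language_def by blast
  then have "drop m w = map x [i + m..<i + m + length (drop m w)]"
    by (cases "m \<le> l") (simp_all add: drop_map)
  with \<open>x \<in> X\<close> show ?thesis unfolding language_def by blast
qed

definition edge_path :: "'e set \<Rightarrow> ('e \<Rightarrow> 'v) \<Rightarrow> ('e \<Rightarrow> 'v) \<Rightarrow> (nat \<Rightarrow> 'e) \<Rightarrow> bool" where
  "edge_path E src tgt q \<longleftrightarrow> (\<forall>i. q i \<in> E \<and> tgt (q i) = src (q (Suc i)))"

definition spells :: "('e \<Rightarrow> 'a) \<Rightarrow> 'a list \<Rightarrow> (nat \<Rightarrow> 'e) \<Rightarrow> bool" where
  "spells lab w q \<longleftrightarrow> (\<forall>k<length w. lab (q k) = w ! k)"

definition path_splice :: "(nat \<Rightarrow> 'e) \<Rightarrow> nat \<Rightarrow> (nat \<Rightarrow> 'e) \<Rightarrow> nat \<Rightarrow> 'e" where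
  "path_splice r m q k = (if k < m then r k else q (k - m))"

lemma language_sofic_shift:
  "w \<in> language (sofic_shift E src tgt lab) \<longleftrightarrow> (\<exists>q. edge_path E src tgt q \<and> spells lab w q)"
proof
  assume "w \<in> language (sofic_shift E src tgt lab)"
  then obtain x i p where w: "w = map x [i..<i + length w]"
    and p: "\<forall>i. p i \<in> E \<and> tgt (p i) = src (p (Suc i))" "\<forall>i. x i = lab (p i)"
    unfolding language_def sofic_shift_def by blast
  have "edge_path E src tgt (\<lambda>k. p (k + i))"
    using p(1) unfolding edge_path_def by simp
  moreover have "spells lab w (\<lambda>k. p (k + i))"
    unfolding spells_def
  proof (intro allI impI)
    fix k assume "k < length w"
    then have "w ! k = x (i + k)" by (subst w) simp
    then show "lab (p (k + i)) = w ! k" using p(2) by (simp add: add.commute)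
  qed
  ultimately show "\<exists>q. edge_path E src tgt q \<and> spells lab w q" by blast
next
  assume "\<exists>q. edge_path E src tgt q \<and> spells lab w q"
  then obtain q where q: "edge_path E src tgt q" "spells lab w q" by blast
  have "(\<lambda>k. lab (q k)) \<in> sofic_shift E src tgt lab"
    using q(1) unfolding sofic_shift_def edge_path_def by blast
  moreover have "w = map (\<lambda>k. lab (q k)) [0..<0 + length w]"
    using q(2) unfolding spells_def by (intro nth_equalityI) auto
  ultimately show "w \<in> language (sofic_shift E src tgt lab)"
    unfolding language_def by blast
qed

lemma edge_path_shift: "edge_path E src tgt q \<Longrightarrow> edge_path E src tgt (\<lambda>k. q (k + m))"
  unfolding edge_path_def by simp

lemma spells_append:
  "spells lab (u @ w) q \<longleftrightarrow> spells lab u q \<and> spells lab w (\<lambda>k. q (k + length u))"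
  unfolding spells_def
proof safe
  fix k assume "\<forall>k<length u. lab (q k) = u ! k" "\<forall>k<length w. lab (q (k + length u)) = w ! k"
    and "k < length (u @ w)"
  then show "lab (q k) = (u @ w) ! k"
    by (cases "k < length u") (auto simp: nth_append dest: spec[of _ "k - length u"])
qed (auto simp: nth_append dest: spec[of _ "_ + length u"])

lemma edge_path_splice:
  assumes "edge_path E src tgt r" "edge_path E src tgt q" "q 0 = r m"
  shows "edge_path E src tgt (path_splice r m q)"
  using assms unfolding edge_path_def path_splice_def
  by (auto simp: Suc_diff_le not_less less_Suc_eq) (metis Suc_leI le_antisym)

lemma spells_splice:
  assumes "spells lab u r" "spells lab w q"
  shows "spells lab (u @ w) (path_splice r (length u) q)"
  using assms unfolding spells_def path_splice_def by (auto simp: nth_append)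

section \<open>A uniform gap length\<close>

definition follower_edges :: "'e set \<Rightarrow> ('e \<Rightarrow> 'v) \<Rightarrow> ('e \<Rightarrow> 'v) \<Rightarrow> ('e \<Rightarrow> 'a) \<Rightarrow> 'a list \<Rightarrow> 'e set" where
  "follower_edges E src tgt lab u = {q (length u) | q. edge_path E src tgt q \<and> spells lab u q}"

definition initial_edges :: "'e set \<Rightarrow> ('e \<Rightarrow> 'v) \<Rightarrow> ('e \<Rightarrow> 'v) \<Rightarrow> ('e \<Rightarrow> 'a) \<Rightarrow> 'a list \<Rightarrow> 'e set" where
  "initial_edges E src tgt lab w = {q 0 | q. edge_path E src tgt q \<and> spells lab w q}"

lemma replace_prefix:
  assumes q: "edge_path E src tgt q" "spells lab (u' @ x) q"
    and eq: "follower_edges E src tgt lab u' = follower_edges E src tgt lab u"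
  shows "\<exists>r. edge_path E src tgt r \<and> spells lab (u @ x) r"
proof -
  have "q (length u') \<in> follower_edges E src tgt lab u"
    using q eq unfolding follower_edges_def spells_append by blast
  then obtain p where p: "edge_path E src tgt p" "spells lab u p" "p (length u) = q (length u')"
    unfolding follower_edges_def by auto
  have "edge_path E src tgt (path_splice p (length u) (\<lambda>k. q (k + length u')))"
    using p by (intro edge_path_splice edge_path_shift q(1)) simp_all
  moreover have "spells lab (u @ x) (path_splice p (length u) (\<lambda>k. q (k + length u')))"
    using p(2) q(2) unfolding spells_append[of lab u'] by (intro spells_splice) auto
  ultimately show ?thesis by blast
qed

lemma replace_suffix:
  assumes q: "edge_path E src tgt q" "spells lab (x @ w') q"
    and eq: "initial_edges E src tgt lab w' = initial_edges E src tgt lab w"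
  shows "\<exists>r. edge_path E src tgt r \<and> spells lab (x @ w) r"
proof -
  have "q (length x) \<in> initial_edges E src tgt lab w"
    using q eq edge_path_shift[OF q(1)] unfolding initial_edges_def spells_append by force
  then obtain p where p: "edge_path E src tgt p" "spells lab w p" "p 0 = q (length x)"
    unfolding initial_edges_def by auto
  have "edge_path E src tgt (path_splice q (length x) p)"
    using p q(1) by (intro edge_path_splice) simp_all
  moreover have "spells lab (x @ w) (path_splice q (length x) p)"
    using q(2) p(2) unfolding spells_append[of lab x w'] by (blast intro: spells_splice)
  ultimately show ?thesis by blast
qed

lemma language_transfer:
  assumes "u' @ v @ w' \<in> language (sofic_shift E src tgt lab)"
    and "follower_edges E src tgt lab u' = follower_edges E src tgt lab u"
    and "initial_edges E src tgt lab w' = initial_edges E src tgt lab w"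
  shows "u @ v @ w \<in> language (sofic_shift E src tgt lab)"
proof -
  obtain q where "edge_path E src tgt q" "spells lab (u' @ v @ w') q"
    using assms(1) unfolding language_sofic_shift by blast
  then obtain r where "edge_path E src tgt r" "spells lab ((u @ v) @ w') r"
    using replace_prefix[OF _ _ assms(2)] by fastforce
  then show ?thesis
    using replace_suffix[OF _ _ assms(3)] unfolding language_sofic_shift by fastforce
qed

lemma eventually_uniform_on_finite_classes:
  assumes "finite (g ` A)"
    and "\<And>a. a \<in> A \<Longrightarrow> eventually (R a) sequentially"
    and "\<And>a a' n. a \<in> A \<Longrightarrow> a' \<in> A \<Longrightarrow> g a = g a' \<Longrightarrow> R a n \<Longrightarrow> R a' n"
  shows "eventually (\<lambda>n. \<forall>a\<in>A. R a n) sequentially"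
proof -
  have "eventually (\<lambda>n. \<forall>a'\<in>A. g a' = c \<longrightarrow> R a' n) sequentially" if c: "c \<in> g ` A" for c
  proof -
    obtain a where "a \<in> A" "g a = c" using c by blast
    with assms(2) have "eventually (R a) sequentially" by blast
    then show ?thesis
      by (rule eventually_mono) (use \<open>a \<in> A\<close> \<open>g a = c\<close> assms(3) in blast)
  qed
  then have "eventually (\<lambda>n. \<forall>c\<in>g ` A. \<forall>a'\<in>A. g a' = c \<longrightarrow> R a' n) sequentially"
    using assms(1) by (intro eventually_ball_finite) auto
  then show ?thesis by (rule eventually_mono) blast
qed

definition uniform_gap :: "(nat \<Rightarrow> 'a) set \<Rightarrow> nat \<Rightarrow> bool" where
  "uniform_gap X K \<longleftrightarrow>
     (\<forall>u\<in>language X. \<forall>w\<in>language X. \<exists>v. length v = K \<and> u @ v @ w \<in> language X)"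

lemma sofic_mixing_uniform_gap:
  assumes "finite E" and "top_mixing (sofic_shift E src tgt lab)"
  shows "\<exists>K. uniform_gap (sofic_shift E src tgt lab) K"
proof -
  define L where "L = language (sofic_shift E src tgt lab)"
  define g where "g = (\<lambda>(u, w). (follower_edges E src tgt lab u, initial_edges E src tgt lab w))"
  define R where "R = (\<lambda>(u, w) n. \<exists>v. length v = n \<and> u @ v @ w \<in> L)"
  have "g ` (L \<times> L) \<subseteq> Pow E \<times> Pow E"
    unfolding g_def follower_edges_def initial_edges_def edge_path_def by auto
  then have "finite (g ` (L \<times> L))"
    using assms(1) by (meson finite_Pow_iff finite_SigmaI finite_subset)
  moreover have "eventually (R a) sequentially" if "a \<in> L \<times> L" for a
    using assms(2) that unfolding top_mixing_def eventually_sequentially R_def L_def by auto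
  moreover have "R a' n" if "g a = g a'" "R a n" for a a' n
  proof -
    obtain u w u' w' where "a = (u, w)" "a' = (u', w')" by fastforce
    then show ?thesis
      using that unfolding g_def R_def L_def by (auto dest: language_transfer[where u = u' and w = w'])
  qed
  ultimately have "eventually (\<lambda>n. \<forall>a\<in>L \<times> L. R a n) sequentially"
    by (rule eventually_uniform_on_finite_classes) auto
  then obtain K where "\<forall>a\<in>L \<times> L. R a K" unfolding eventually_sequentially by blast
  then show ?thesis unfolding uniform_gap_def R_def L_def by auto
qed

section \<open>Closedness of sofic shifts\<close>

lemma finite_branching_limit:
  fixes Q :: "nat \<Rightarrow> nat \<Rightarrow> 'e"
  assumes "finite E" and "\<And>n k. Q n k \<in> E"
  shows "\<exists>c. \<forall>m. infinite {n. \<forall>k<m. Q n k = c k}"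
proof -
  define agree where "agree s = {n. \<forall>k<length s. Q n k = s ! k}" for s
  have extend: "\<exists>e. infinite (agree (s @ [e]))" if inf: "infinite (agree s)" for s
  proof -
    have "finite ((\<lambda>n. Q n (length s)) ` agree s)"
      using assms by (meson finite_subset image_subsetI)
    then obtain n where "infinite {n' \<in> agree s. Q n' (length s) = Q n (length s)}"
      using pigeonhole_infinite[OF inf] by blast
    moreover have "{n' \<in> agree s. Q n' (length s) = Q n (length s)} = agree (s @ [Q n (length s)])"
      by (auto simp: agree_def nth_append less_Suc_eq)
    ultimately show ?thesis by auto
  qed
  define S where "S = rec_nat [] (\<lambda>_ s. s @ [SOME e. infinite (agree (s @ [e]))])"
  have S_Suc: "S (Suc m) = S m @ [SOME e. infinite (agree (S m @ [e]))]" for m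
    by (simp add: S_def)
  have S: "infinite (agree (S m)) \<and> length (S m) = m" for m
  proof (induction m)
    case 0
    then show ?case by (simp add: S_def agree_def)
  next
    case (Suc m)
    then show ?case using someI_ex[OF extend] by (simp add: S_Suc)
  qed
  have S_nth: "S m ! k = S (Suc k) ! k" if "k < m" for k m
    using that
  proof (induction m)
    case (Suc m)
    then show ?case using S[of m] by (auto simp: S_Suc nth_append less_Suc_eq)
  qed simp
  have "agree (S m) = {n. \<forall>k<m. Q n k = S (Suc k) ! k}" for m
    using S[of m] S_nth[of _ m] by (auto simp: agree_def)
  then have "infinite {n. \<forall>k<m. Q n k = S (Suc k) ! k}" for m
    using S[of m] by simp
  then show ?thesis by (intro exI[of _ "\<lambda>k. S (Suc k) ! k"]) simp
qed

text \<open>Closedness in the product topology, expressed through the language.\<close>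

definition language_closed :: "(nat \<Rightarrow> 'a) set \<Rightarrow> bool" where
  "language_closed X \<longleftrightarrow> (\<forall>y. (\<forall>n. map y [0..<n] \<in> language X) \<longrightarrow> y \<in> X)"

lemma sofic_shift_language_closed:
  assumes "finite E"
  shows "language_closed (sofic_shift E src tgt lab)"
  unfolding language_closed_def
proof (intro allI impI)
  fix y assume "\<forall>n. map y [0..<n] \<in> language (sofic_shift E src tgt lab)"
  then have "\<forall>n. \<exists>q. edge_path E src tgt q \<and> (\<forall>k<n. lab (q k) = y k)"
    unfolding language_sofic_shift spells_def by simp
  then obtain Q where Q: "\<And>n. edge_path E src tgt (Q n)" "\<And>n k. k < n \<Longrightarrow> lab (Q n k) = y k"
    by metis
  obtain c where c: "\<And>m. infinite {n. \<forall>k<m. Q n k = c k}"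
    using finite_branching_limit[OF assms, of Q] Q(1) unfolding edge_path_def by blast
  have "c k \<in> E \<and> tgt (c k) = src (c (Suc k)) \<and> y k = lab (c k)" for k
  proof -
    obtain n where n: "n > Suc k" "\<forall>j<Suc (Suc k). Q n j = c j"
      using c[of "Suc (Suc k)"] unfolding infinite_nat_iff_unbounded by blast
    then have "Q n k = c k" "Q n (Suc k) = c (Suc k)" "lab (Q n k) = y k"
      using Q(2)[of k n] by auto
    then show ?thesis using Q(1)[of n] unfolding edge_path_def by metis
  qed
  then show "y \<in> sofic_shift E src tgt lab"
    unfolding sofic_shift_def by blast
qed

section \<open>Gluing words\<close>

lemma word_start_mono: "j \<le> j' \<Longrightarrow> word_start ws j \<le> word_start ws j'"
  by (induction j' rule: dec_induct) auto

lemma word_start_ge: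
  assumes "\<And>j. N \<le> length (ws j)"
  shows "j * N \<le> word_start ws j"
proof (induction j)
  case (Suc j)
  then show ?case using add_mono[OF Suc assms[of j]] by (simp add: add.commute)
qed simp

lemma concat_words_eq:
  assumes "word_start ws j \<le> k" "k < word_start ws (Suc j)"
  shows "concat_words ws k = ws j ! (k - word_start ws j)"
proof -
  have "(LEAST j. k < word_start ws (Suc j)) = j"
  proof (rule Least_equality)
    show "k < word_start ws (Suc j)" by (rule assms(2))
    show "j \<le> j'" if "k < word_start ws (Suc j')" for j'
    proof (rule ccontr)
      assume "\<not> j \<le> j'"
      then have "word_start ws (Suc j') \<le> word_start ws j" by (intro word_start_mono) simp
      with that assms(1) show False by simp
    qed
  qed
  then show ?thesis unfolding concat_words_def Let_def by simp
qed

lemma word_start_block: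
  assumes "\<And>j. 0 < length (ws j)"
  obtains j where "word_start ws j \<le> k" "k < word_start ws (Suc j)"
proof -
  define j where "j = (LEAST j. k < word_start ws (Suc j))"
  have "Suc k * 1 \<le> word_start ws (Suc k)"
    by (rule word_start_ge) (use assms in \<open>simp add: Suc_le_eq\<close>)
  then have "k < word_start ws (Suc k)" by simp
  then have "k < word_start ws (Suc j)"
    unfolding j_def by (rule LeastI[where P = "\<lambda>j. k < word_start ws (Suc j)"])
  moreover have "word_start ws j \<le> k"
  proof (cases j)
    case (Suc i)
    then show ?thesis
      using not_less_Least[of i "\<lambda>j. k < word_start ws (Suc j)"] unfolding j_def by simp
  qed simp
  ultimately show ?thesis using that by blast
qed

definition gap_filler :: "(nat \<Rightarrow> 'a) set \<Rightarrow> nat \<Rightarrow> 'a list \<Rightarrow> 'a list \<Rightarrow> 'a list" where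
  "gap_filler X K u w = (SOME v. length v = K \<and> u @ v @ w \<in> language X)"

lemma gap_filler:
  assumes "uniform_gap X K" "u \<in> language X" "w \<in> language X"
  shows "length (gap_filler X K u w) = K \<and> u @ gap_filler X K u w @ w \<in> language X"
proof -
  have "\<exists>v. length v = K \<and> u @ v @ w \<in> language X"
    using assms unfolding uniform_gap_def by blast
  then show ?thesis unfolding gap_filler_def by (rule someI_ex)
qed

primrec glued :: "(nat \<Rightarrow> 'a) set \<Rightarrow> nat \<Rightarrow> (nat \<Rightarrow> 'a list) \<Rightarrow> nat \<Rightarrow> 'a list" where
  "glued X K ws 0 = ws 0"
| "glued X K ws (Suc j) =
     glued X K ws j @ gap_filler X K (glued X K ws j) (drop K (ws (Suc j))) @ drop K (ws (Suc j))"

lemma glued_extends: "j \<le> j' \<Longrightarrow> \<exists>t. glued X K ws j' = glued X K ws j @ t"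
  by (induction j' rule: dec_induct) auto

lemma glued_nth_stable:
  assumes "k < length (glued X K ws j)" "k < length (glued X K ws j')"
  shows "glued X K ws j ! k = glued X K ws j' ! k"
proof (cases "j \<le> j'")
  case True
  then obtain t where "glued X K ws j' = glued X K ws j @ t" using glued_extends[of j j' X K ws] by blast
  then show ?thesis using assms(1) by (simp add: nth_append)
next
  case False
  then obtain t where "glued X K ws j = glued X K ws j' @ t" using glued_extends[of j' j X K ws] by auto
  then show ?thesis using assms(2) by (simp add: nth_append)
qed

definition gap_windows :: "(nat \<Rightarrow> 'a list) \<Rightarrow> nat \<Rightarrow> nat set" where
  "gap_windows ws K = (\<Union>j\<in>{1..}. {word_start ws j..<word_start ws j + K})"

context
  fixes X :: "(nat \<Rightarrow> 'a) set" and K :: nat and ws :: "nat \<Rightarrow> 'a list"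
  assumes gap: "uniform_gap X K"
    and words: "\<And>j. ws j \<in> language X"
    and long: "\<And>j. K < length (ws j)"
begin

lemma glued_language:
  "glued X K ws j \<in> language X \<and> length (glued X K ws j) = word_start ws (Suc j)"
proof (induction j)
  case (Suc j)
  have "drop K (ws (Suc j)) \<in> language X" using words by (rule language_drop)
  from gap_filler[OF gap conjunct1[OF Suc] this]
  show ?case using Suc long[of "Suc j"] by simp
qed (simp add: words)

lemma glued_nth_word:
  assumes "word_start ws j + K \<le> k" "k < word_start ws (Suc j)"
  shows "glued X K ws j ! k = ws j ! (k - word_start ws j)"
proof (cases j)
  case (Suc i)
  let ?d = "drop K (ws j)"
  have "?d \<in> language X" using words by (rule language_drop)
  from gap_filler[OF gap conjunct1[OF glued_language[of i]] this]
  have "length (glued X K ws i @ gap_filler X K (glued X K ws i) ?d) = word_start ws j + K"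
    using glued_language[of i] Suc by simp
  then have "glued X K ws j ! k = ?d ! (k - (word_start ws j + K))"
    using assms(1) Suc by (simp add: nth_append flip: append_assoc)
  also have "\<dots> = ws j ! (k - word_start ws j)"
    using assms(1) long[of j] by simp
  finally show ?thesis .
qed simp

lemma glued_limit:
  assumes "language_closed X"
  shows "\<exists>y\<in>X. {k. concat_words ws k \<noteq> y k} \<subseteq> gap_windows ws K"
proof -
  define y where "y k = glued X K ws k ! k" for k
  have nonempty: "1 \<le> length (ws i)" for i
    using long[of i] by linarith
  then have positive: "0 < length (ws i)" for i
    by (simp add: Suc_le_eq)
  have in_glued: "k < length (glued X K ws k)" for k
    using word_start_ge[of 1 ws "Suc k", OF nonempty] glued_language[of k] by simp
  have y: "y k = glued X K ws j ! k" if "k < length (glued X K ws j)" for k j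
    unfolding y_def using glued_nth_stable in_glued that by blast
  have "map y [0..<n] = take n (glued X K ws n)" for n
    using in_glued[of n] y[of _ n] by (intro nth_equalityI) auto
  then have "map y [0..<n] \<in> language X" for n
    using language_take[OF conjunct1[OF glued_language[of n]]] by simp
  then have "y \<in> X"
    using assms unfolding language_closed_def by blast
  moreover have "k \<in> gap_windows ws K" if mismatch: "concat_words ws k \<noteq> y k" for k
  proof -
    obtain j where j: "word_start ws j \<le> k" "k < word_start ws (Suc j)"
      using word_start_block[of ws k] positive by blast
    have "y k = glued X K ws j ! k"
      using y j(2) glued_language by simp
    moreover have "concat_words ws k = ws j ! (k - word_start ws j)"
      using concat_words_eq[OF j] .
    ultimately have differ: "glued X K ws j ! k \<noteq> ws j ! (k - word_start ws j)"
      using mismatch by simp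
    then have "j \<noteq> 0" by (cases j) auto
    moreover have "k < word_start ws j + K"
      using differ glued_nth_word[OF _ j(2)] not_le by blast
    ultimately show ?thesis unfolding gap_windows_def using j(1) by auto
  qed
  ultimately show ?thesis by blast
qed

end

section \<open>The \<open>d\<close>-bar estimate\<close>

lemma card_gap_windows_le:
  assumes long: "\<And>j. N \<le> length (ws j)" and "0 < N"
  shows "card ({..<n} \<inter> gap_windows ws K) * N \<le> n * K"
proof -
  have "{..<n} \<inter> gap_windows ws K \<subseteq> (\<Union>j\<in>{1..n div N}. {word_start ws j..<word_start ws j + K})"
  proof
    fix k assume "k \<in> {..<n} \<inter> gap_windows ws K"
    then obtain j where j: "1 \<le> j" "word_start ws j \<le> k" "k < word_start ws j + K" "k < n"
      unfolding gap_windows_def by auto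
    have "j * N \<le> n"
      using word_start_ge[of N ws j, OF long] j by linarith
    then have "j \<le> n div N"
      using assms(2) by (simp add: less_eq_div_iff_mult_less_eq)
    then show "k \<in> (\<Union>j\<in>{1..n div N}. {word_start ws j..<word_start ws j + K})"
      using j by auto
  qed
  then have "card ({..<n} \<inter> gap_windows ws K)
      \<le> card (\<Union>j\<in>{1..n div N}. {word_start ws j..<word_start ws j + K})"
    by (intro card_mono) auto
  also have "\<dots> \<le> (\<Sum>j\<in>{1..n div N}. card {word_start ws j..<word_start ws j + K})"
    by (rule card_UN_le) simp
  also have "\<dots> = n div N * K" by simp
  finally have "card ({..<n} \<inter> gap_windows ws K) * N \<le> (n div N * N) * K"
    by (simp add: mult.commute mult.left_commute)
  also have "\<dots> \<le> n * K"
    by (simp add: div_times_less_eq_dividend)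
  finally show ?thesis .
qed

lemma dbar_le_ratio:
  assumes count: "\<And>n. card {j. j < n \<and> x j \<noteq> y j} * N \<le> n * K" and "0 < N"
  shows "dbar x y \<le> ereal (real K / real N)"
  unfolding dbar_def
proof (intro Limsup_bounded always_eventually allI)
  fix n
  show "ereal (real (card {j. j < n \<and> x j \<noteq> y j}) / real n) \<le> ereal (real K / real N)"
  proof (cases "n = 0")
    case False
    have "real (card {j. j < n \<and> x j \<noteq> y j}) * real N \<le> real n * real K"
      using count[of n] by (metis of_nat_le_iff of_nat_mult)
    then show ?thesis
      using False assms(2) by (simp add: divide_simps mult.commute)
  qed simp
qed

lemma uniform_gap_dbar_shadowing:
  assumes closed: "language_closed X" and gap: "uniform_gap X K"
  shows "dbar_shadowing X"
  unfolding dbar_shadowing_def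
proof (intro allI impI)
  fix \<epsilon> :: real assume "\<epsilon> > 0"
  define N where "N = K + 1 + nat \<lceil>real K / \<epsilon>\<rceil>"
  have "K < N" unfolding N_def by simp
  have "real K / \<epsilon> < real N" unfolding N_def by linarith
  with \<open>\<epsilon> > 0\<close> \<open>K < N\<close> have ratio: "real K / real N < \<epsilon>"
    by (simp add: divide_simps mult.commute)
  have "\<exists>x'\<in>X. dbar (concat_words ws) x' < ereal \<epsilon>"
    if ws: "\<forall>j. ws j \<in> language X \<and> N \<le> length (ws j)" for ws
  proof -
    obtain y where "y \<in> X" and mismatch: "{k. concat_words ws k \<noteq> y k} \<subseteq> gap_windows ws K"
      using glued_limit[OF gap _ _ closed] ws \<open>K < N\<close> by (meson order.strict_trans2)
    have "card {j. j < n \<and> concat_words ws j \<noteq> y j} * N \<le> n * K" for n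
    proof -
      have "card {j. j < n \<and> concat_words ws j \<noteq> y j} \<le> card ({..<n} \<inter> gap_windows ws K)"
        using mismatch by (intro card_mono) auto
      moreover have "card ({..<n} \<inter> gap_windows ws K) * N \<le> n * K"
        by (rule card_gap_windows_le) (use ws \<open>K < N\<close> in auto)
      ultimately show ?thesis by (meson le_trans mult_le_mono1)
    qed
    then have "dbar (concat_words ws) y \<le> ereal (real K / real N)"
      using \<open>K < N\<close> by (intro dbar_le_ratio) auto
    also have "\<dots> < ereal \<epsilon>" using ratio by simp
    finally show ?thesis using \<open>y \<in> X\<close> by blast
  qed
  then show "\<exists>N. N \<ge> 1 \<and> (\<forall>ws. (\<forall>j. ws j \<in> language X \<and> length (ws j) \<ge> N) \<longrightarrow>
      (\<exists>x'\<in>X. dbar (concat_words ws) x' < ereal \<epsilon>))"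
    using \<open>K < N\<close> by (intro exI[of _ N]) auto
qed

theorem mainTheorem4:
  fixes E :: "'e set" and src tgt :: "'e \<Rightarrow> 'v" and lab :: "'e \<Rightarrow> 'a"
  assumes "finite E"
    and "top_mixing (sofic_shift E src tgt lab)"
  shows "dbar_shadowing (sofic_shift E src tgt lab)"
proof -
  obtain K where "uniform_gap (sofic_shift E src tgt lab) K"
    using sofic_mixing_uniform_gap[OF assms] by blast
  with sofic_shift_language_closed[OF assms(1)] show ?thesis
    by (rule uniform_gap_dbar_shadowing)
qed

end
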